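(* Let $k,r\in\mathbb{N}$ and let $M_1,\dots,M_k$ be matchings (in a common undirected graph) with $\Delta\big(\bigcup_{i\in[k]}M_i\big)\leq r$. Suppose $e(M_i)>2(r^3+r)^2\ln k$ for all $i\in[k]$. Then there exists a matching $H\subseteq\bigcup_{i\in[k]}M_i$ with $|E(H)\cap M_i|\geq e(M_i)/(r^2+1)$ for all $i\in[k]$.
   Context: A matching is a set of edges no two of which share a vertex; $\Delta$ denotes maximum degree of the undirected graph formed by the union of the edge sets. *)

theory Defs
  imports Complex_Main
begin

text \<open>Undirected (simple) graphs are represented by their edge sets: an edge is a
  2-element vertex set.\<close>

definition is_edge_set :: "'a set set \<Rightarrow> bool" where
  "is_edge_set E \<longleftrightarrow> (\<forall>e\<in>E. card e = 2)"

definition matching :: "'a set set \<Rightarrow> bool" where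
  "matching M \<longleftrightarrow> finite M \<and> is_edge_set M \<and>
     (\<forall>e\<in>M. \<forall>f\<in>M. e \<noteq> f \<longrightarrow> e \<inter> f = {})"

definition degree :: "'a set set \<Rightarrow> 'a \<Rightarrow> nat" where
  "degree E v = card {e\<in>E. v \<in> e}"

definition max_degree_le :: "'a set set \<Rightarrow> nat \<Rightarrow> bool" where
  "max_degree_le E r \<longleftrightarrow> (\<forall>v. degree E v \<le> r)"

end

theory Submission
  imports Defs "HOL-Library.FuncSet"
begin

text \<open>Every vertex labels its at most r incident edges injectively by labels in {0..<r}. Let
  every vertex choose a label uniformly at random and select the edges both of whose endpoints
  chose that edge's label. By injectivity the selected edges form a matching; each edge is
  selected with probability 1/r^2, independently along any one matching M i. A Chernoff bound
  (exponential moment with parameter 1/(r^2+1), estimated via exp(-x) \<le> 1 - x + x^2/2) shows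
  that fewer than e(M i)/(r^2+1) edges of M i are selected with probability less than 1/k, and a
  union bound over the k matchings gives a good choice. Probabilities appear as numbers of
  choice functions in PiE V ({..<r}).\<close>

lemma sum_PiE_Un_mult:
  fixes f g :: "('i \<Rightarrow> 'b) \<Rightarrow> 'c::comm_semiring_1"
  assumes disj: "B \<inter> C = {}"
    and f: "\<And>\<omega> \<omega>'. (\<And>x. x \<in> B \<Longrightarrow> \<omega> x = \<omega>' x) \<Longrightarrow> f \<omega> = f \<omega>'"
    and g: "\<And>\<omega> \<omega>'. (\<And>x. x \<in> C \<Longrightarrow> \<omega> x = \<omega>' x) \<Longrightarrow> g \<omega> = g \<omega>'"
  shows "(\<Sum>\<omega>\<in>PiE (B \<union> C) F. f \<omega> * g \<omega>) = (\<Sum>\<omega>\<in>PiE B F. f \<omega>) * (\<Sum>\<omega>\<in>PiE C F. g \<omega>)"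
proof -
  have bij: "bij_betw (\<lambda>\<omega>. (restrict \<omega> B, restrict \<omega> C)) (PiE (B \<union> C) F) (PiE B F \<times> PiE C F)"
    by (rule bij_betwI[where g = "\<lambda>(x, y) i. if i \<in> B then x i else y i"])
       (use disj in \<open>auto simp: PiE_def extensional_def fun_eq_iff\<close>)
  have "(\<Sum>\<omega>\<in>PiE (B \<union> C) F. f \<omega> * g \<omega>)
      = (\<Sum>\<omega>\<in>PiE (B \<union> C) F. f (restrict \<omega> B) * g (restrict \<omega> C))"
    using f[of "restrict _ B"] g[of "restrict _ C"] by simp
  also have "\<dots> = (\<Sum>(x, y) \<in> PiE B F \<times> PiE C F. f x * g y)"
    using sum.reindex_bij_betw[OF bij, of "\<lambda>(x, y). f x * g y"] by simp
  also have "\<dots> = (\<Sum>\<omega>\<in>PiE B F. f \<omega>) * (\<Sum>\<omega>\<in>PiE C F. g \<omega>)"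
    by (simp add: sum_product sum.cartesian_product)
  finally show ?thesis .
qed

lemma sum_PiE_prod_disjoint_blocks:
  fixes g :: "'i set \<Rightarrow> ('i \<Rightarrow> 'b) \<Rightarrow> 'c::comm_semiring_1"
  assumes "finite V" "pairwise disjnt P" "\<Union>P \<subseteq> V"
    and "\<And>b \<omega> \<omega>'. b \<in> P \<Longrightarrow> (\<And>x. x \<in> b \<Longrightarrow> \<omega> x = \<omega>' x) \<Longrightarrow> g b \<omega> = g b \<omega>'"
  shows "(\<Sum>\<omega>\<in>PiE V F. \<Prod>b\<in>P. g b \<omega>)
       = (\<Prod>i\<in>V - \<Union>P. of_nat (card (F i))) * (\<Prod>b\<in>P. \<Sum>\<omega>\<in>PiE b F. g b \<omega>)"
proof -
  have "P \<subseteq> Pow V"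
    using assms(3) by blast
  then have "finite P"
    using assms(1) by (simp add: finite_subset)
  then show ?thesis
    using assms(1-4)
  proof (induction P arbitrary: V rule: finite_induct)
    case empty
    then show ?case by (simp add: card_PiE)
  next
    case (insert b P)
    have disj: "b \<inter> (V - b) = {}" and V: "b \<union> (V - b) = V" and "\<Union>P \<subseteq> V - b"
      using insert.prems(2,3) insert.hyps(2) by (auto simp: pairwise_def disjnt_def)
    have "(\<Sum>\<omega>\<in>PiE V F. \<Prod>c\<in>insert b P. g c \<omega>)
        = (\<Sum>\<omega>\<in>PiE (b \<union> (V - b)) F. g b \<omega> * (\<Prod>c\<in>P. g c \<omega>))"
      unfolding V using insert.hyps by simp
    also have "\<dots> = (\<Sum>\<omega>\<in>PiE b F. g b \<omega>) * (\<Sum>\<omega>\<in>PiE (V - b) F. \<Prod>c\<in>P. g c \<omega>)"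
    proof (rule sum_PiE_Un_mult[OF disj])
      show "g b \<omega> = g b \<omega>'" if "\<And>x. x \<in> b \<Longrightarrow> \<omega> x = \<omega>' x" for \<omega> \<omega>'
        by (rule insert.prems(4)[OF insertI1]) (rule that)
      show "(\<Prod>c\<in>P. g c \<omega>) = (\<Prod>c\<in>P. g c \<omega>')"
        if "\<And>x. x \<in> V - b \<Longrightarrow> \<omega> x = \<omega>' x" for \<omega> \<omega>'
      proof (rule prod.cong[OF refl])
        fix c assume "c \<in> P"
        then show "g c \<omega> = g c \<omega>'"
          by (rule insert.prems(4)[OF insertI2]) (use \<open>c \<in> P\<close> \<open>\<Union>P \<subseteq> V - b\<close> that in blast)
      qed
    qed
    also have "(\<Sum>\<omega>\<in>PiE (V - b) F. \<Prod>c\<in>P. g c \<omega>)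
        = (\<Prod>i\<in>V - b - \<Union>P. of_nat (card (F i))) * (\<Prod>c\<in>P. \<Sum>\<omega>\<in>PiE c F. g c \<omega>)"
    proof (rule insert.IH)
      show "finite (V - b)" "pairwise disjnt P" "\<Union>P \<subseteq> V - b"
        using insert.prems(1,2) \<open>\<Union>P \<subseteq> V - b\<close> by (auto simp: pairwise_insert)
      show "g c \<omega> = g c \<omega>'" if "c \<in> P" "\<And>x. x \<in> c \<Longrightarrow> \<omega> x = \<omega>' x" for c \<omega> \<omega>'
        by (rule insert.prems(4)[OF insertI2[OF that(1)]]) (rule that(2))
    qed
    also have "V - b - \<Union>P = V - \<Union>(insert b P)"
      by blast
    finally show ?case
      using insert.hyps by (simp add: mult_ac)
  qed
qed

lemma card_less_mult_exp_le_sum_exp: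
  fixes S :: "'a \<Rightarrow> real"
  assumes "finite \<Omega>" "0 \<le> \<delta>"
  shows "card {\<omega>\<in>\<Omega>. S \<omega> < a} * exp (- \<delta> * a) \<le> (\<Sum>\<omega>\<in>\<Omega>. exp (- \<delta> * S \<omega>))"
proof -
  have "card {\<omega>\<in>\<Omega>. S \<omega> < a} * exp (- \<delta> * a) = (\<Sum>\<omega>\<in>{\<omega>\<in>\<Omega>. S \<omega> < a}. exp (- \<delta> * a))"
    by simp
  also have "\<dots> \<le> (\<Sum>\<omega>\<in>{\<omega>\<in>\<Omega>. S \<omega> < a}. exp (- \<delta> * S \<omega>))"
    using assms(2) by (intro sum_mono) (simp add: mult_left_mono)
  also have "\<dots> \<le> (\<Sum>\<omega>\<in>\<Omega>. exp (- \<delta> * S \<omega>))"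
    using assms(1) by (intro sum_mono2) auto
  finally show ?thesis .
qed

lemma exists_outside_small_sets:
  assumes "finite \<Omega>" "finite I" "I \<noteq> {}" "\<And>i. i \<in> I \<Longrightarrow> B i \<subseteq> \<Omega>"
    and small: "\<And>i. i \<in> I \<Longrightarrow> card (B i) * card I < card \<Omega>"
  shows "\<exists>\<omega>\<in>\<Omega>. \<forall>i\<in>I. \<omega> \<notin> B i"
proof -
  have "card (\<Union>i\<in>I. B i) * card I \<le> (\<Sum>i\<in>I. card (B i) * card I)"
    using card_UN_le[OF assms(2), of B] by (simp flip: sum_distrib_right)
  also have "\<dots> < (\<Sum>i\<in>I. card \<Omega>)"
    using assms(2,3) small by (intro sum_strict_mono) auto
  also have "\<dots> = card \<Omega> * card I"
    by simp
  finally have "card (\<Union>i\<in>I. B i) < card \<Omega>"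
    by simp
  moreover have "finite (\<Union>i\<in>I. B i)"
    using assms(1,4) by (meson UN_least finite_subset)
  ultimately have "\<not> \<Omega> \<subseteq> (\<Union>i\<in>I. B i)"
    using card_mono leD by blast
  then show ?thesis
    by blast
qed

lemma exp_neg_le_quadratic:
  fixes x :: real
  assumes "0 \<le> x"
  shows "exp (- x) \<le> 1 - x + x\<^sup>2 / 2"
proof -
  obtain t where t: "exp (- x) = (\<Sum>m<3. (- x) ^ m / fact m) + exp t / fact 3 * (- x) ^ 3"
    using Maclaurin_exp_le[of "- x" 3] by blast
  have "(\<Sum>m<3. (- x) ^ m / fact m) = 1 - x + x\<^sup>2 / 2"
    by (simp add: numeral_3_eq_3 power2_eq_square)
  moreover have "exp t / fact 3 * (- x) ^ 3 \<le> 0"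
    using assms by (intro mult_nonneg_nonpos) (auto simp: power_odd_eq)
  ultimately show ?thesis
    using t by linarith
qed

lemma chernoff_exponent_bound:
  fixes R :: real and n k :: nat
  assumes R: "1 \<le> R" and k: "1 \<le> k" and n: "2 * R * (R + 1)\<^sup>2 * ln k < n"
  shows "(1 - (1 - exp (- 1 / (R + 1))) / R) ^ n < exp (- n / (R + 1)\<^sup>2) / k"
proof -
  define \<delta> where "\<delta> = 1 / (R + 1)"
  define x where "x = 1 - exp (- \<delta>)"
  have "0 < \<delta>"
    using R by (simp add: \<delta>_def)
  then have x_ge: "\<delta> - \<delta>\<^sup>2 / 2 \<le> x"
    using exp_neg_le_quadratic[of \<delta>] by (simp add: x_def)
  have "x \<le> R"
    using R exp_gt_zero[of "- \<delta>"] unfolding x_def by linarith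
  have "(1 - x / R) ^ n \<le> exp (- x / R) ^ n"
    using \<open>x \<le> R\<close> R exp_ge_add_one_self[of "- x / R"] by (intro power_mono) auto
  also have "\<dots> = exp (- n * x / R)"
    by (simp flip: exp_of_nat_mult)
  also have "\<dots> \<le> exp (- n * (\<delta> - \<delta>\<^sup>2 / 2) / R)"
    using x_ge R by (simp add: divide_right_mono mult_left_mono)
  also have "- n * (\<delta> - \<delta>\<^sup>2 / 2) / R = - n / (R + 1)\<^sup>2 - n / (2 * R * (R + 1)\<^sup>2)"
    using R by (simp add: \<delta>_def divide_simps) (simp add: algebra_simps power2_eq_square)
  also have "exp \<dots> < exp (- n / (R + 1)\<^sup>2 - ln k)"
  proof -
    have "ln k < n / (2 * R * (R + 1)\<^sup>2)"
      using n R by (simp add: pos_less_divide_eq mult_ac)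
    then show ?thesis
      by simp
  qed
  also have "\<dots> = exp (- n / (R + 1)\<^sup>2) / k"
    using k by (simp add: exp_diff)
  finally show ?thesis
    by (simp add: x_def \<delta>_def)
qed

text \<open>\<open>\<iota> v e\<close> is the label of edge \<open>e\<close> at its endpoint \<open>v\<close>, and \<open>\<omega> v\<close> the label chosen by \<open>v\<close>.\<close>

definition selected_edges :: "('v \<Rightarrow> 'v set \<Rightarrow> nat) \<Rightarrow> ('v \<Rightarrow> nat) \<Rightarrow> 'v set set \<Rightarrow> 'v set set" where
  "selected_edges \<iota> \<omega> E = {e \<in> E. \<forall>v\<in>e. \<omega> v = \<iota> v e}"

lemma incidence_labelling_exists:
  assumes "finite E" "max_degree_le E r"
  shows "\<exists>\<iota>. \<forall>v. inj_on (\<iota> v) {e \<in> E. v \<in> e} \<and> (\<forall>e\<in>E. v \<in> e \<longrightarrow> \<iota> v e < r)"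
proof -
  have "\<exists>h. inj_on h {e \<in> E. v \<in> e} \<and> (\<forall>e\<in>E. v \<in> e \<longrightarrow> h e < r)" for v
  proof -
    obtain h where h: "bij_betw h {e \<in> E. v \<in> e} {0..<card {e \<in> E. v \<in> e}}"
      using ex_bij_betw_finite_nat[of "{e \<in> E. v \<in> e}"] assms(1) by auto
    have "h e < r" if "e \<in> E" "v \<in> e" for e
    proof -
      have "h e < card {e \<in> E. v \<in> e}"
        using bij_betwE[OF h] that by auto
      also have "\<dots> \<le> r"
        using assms(2) by (simp add: max_degree_le_def degree_def)
      finally show ?thesis .
    qed
    then show ?thesis
      using h by (auto simp: bij_betw_def)
  qed
  then show ?thesis by metis
qed

lemma matching_selected_edges:
  assumes "finite E" "is_edge_set E" "\<And>v. inj_on (\<iota> v) {e \<in> E. v \<in> e}"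
  shows "matching (selected_edges \<iota> \<omega> E)"
  unfolding matching_def
proof (intro conjI ballI impI)
  show "finite (selected_edges \<iota> \<omega> E)" "is_edge_set (selected_edges \<iota> \<omega> E)"
    using assms(1,2) by (auto simp: selected_edges_def is_edge_set_def)
  fix e f assume e: "e \<in> selected_edges \<iota> \<omega> E" and f: "f \<in> selected_edges \<iota> \<omega> E" and "e \<noteq> f"
  show "e \<inter> f = {}"
  proof (rule ccontr)
    assume "e \<inter> f \<noteq> {}"
    then obtain v where "v \<in> e" "v \<in> f" by blast
    then have "\<iota> v e = \<iota> v f" and "e \<in> {e \<in> E. v \<in> e}" "f \<in> {e \<in> E. v \<in> e}"
      using e f by (auto simp: selected_edges_def)
    then show False
      using assms(3) \<open>e \<noteq> f\<close> by (auto dest: inj_onD)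
  qed
qed

lemma sum_exp_card_selected_edges:
  fixes \<delta> :: real
  assumes M: "matching M" and V: "finite V" "\<Union>M \<subseteq> V" and r: "0 < r"
    and \<iota>: "\<And>e v. e \<in> M \<Longrightarrow> v \<in> e \<Longrightarrow> \<iota> v e < r"
  shows "(\<Sum>\<omega>\<in>PiE V (\<lambda>_. {..<r}). exp (- \<delta> * card (selected_edges \<iota> \<omega> M)))
       = real r ^ card V * (1 - (1 - exp (- \<delta>)) / real r ^ 2) ^ card M"
proof -
  define A where "A = {..<r}"
  define G where "G e \<omega> = (if \<forall>v\<in>e. \<omega> v = \<iota> v e then exp (- \<delta>) else 1)" for e and \<omega> :: "'a \<Rightarrow> nat"
  have fin: "finite M" and two: "\<And>e. e \<in> M \<Longrightarrow> card e = 2" and disj: "pairwise disjnt M"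
    using M by (auto simp: matching_def is_edge_set_def pairwise_def disjnt_def)
  have fin_edge: "finite e" if "e \<in> M" for e
    using two[OF that] card.infinite by fastforce
  have exp_as_prod: "exp (- \<delta> * card (selected_edges \<iota> \<omega> M)) = (\<Prod>e\<in>M. G e \<omega>)" for \<omega>
  proof -
    have "(\<Prod>e\<in>M. G e \<omega>) = exp (- \<delta>) ^ card (selected_edges \<iota> \<omega> M)"
      using fin by (simp add: G_def prod.If_cases selected_edges_def Collect_conj_eq Int_commute)
    then show ?thesis
      by (simp add: exp_of_nat_mult[symmetric] mult.commute)
  qed
  have edge_sum: "(\<Sum>\<omega>\<in>PiE e (\<lambda>_. A). G e \<omega>) = real r ^ 2 - 1 + exp (- \<delta>)" if e: "e \<in> M" for e
  proof -
    define \<phi> where "\<phi> = restrict (\<lambda>v. \<iota> v e) e"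
    have \<phi>: "\<phi> \<in> PiE e (\<lambda>_. A)"
      using \<iota> e by (auto simp: \<phi>_def A_def)
    have card: "card (PiE e (\<lambda>_. A)) = r ^ 2"
      using two[OF e] fin_edge[OF e] by (simp add: card_PiE A_def)
    have "G e \<omega> = 1 + (if \<omega> = \<phi> then exp (- \<delta>) - 1 else 0)" if "\<omega> \<in> PiE e (\<lambda>_. A)" for \<omega>
      using that by (auto simp: G_def \<phi>_def PiE_def extensional_def fun_eq_iff)
    then have "(\<Sum>\<omega>\<in>PiE e (\<lambda>_. A). G e \<omega>) = card (PiE e (\<lambda>_. A)) + (exp (- \<delta>) - 1)"
      using \<phi> fin_edge[OF e] by (simp add: sum.distrib finite_PiE A_def)
    then show ?thesis
      using card by simp
  qed
  have "card (\<Union>M) = 2 * card M"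
    using fin fin_edge disj two by (simp add: card_Union_disjoint)
  then have "2 * card M \<le> card V" "card (V - \<Union>M) = card V - 2 * card M"
    using V card_mono[OF V] by (auto simp: card_Diff_subset finite_subset)
  have "(\<Sum>\<omega>\<in>PiE V (\<lambda>_. A). exp (- \<delta> * card (selected_edges \<iota> \<omega> M)))
      = (\<Sum>\<omega>\<in>PiE V (\<lambda>_. A). \<Prod>e\<in>M. G e \<omega>)"
    using exp_as_prod by simp
  \<comment> \<open>the edges of a matching are disjoint blocks of coordinates, so their selections are independent\<close>
  also have "\<dots> = (\<Prod>i\<in>V - \<Union>M. real (card A)) * (\<Prod>e\<in>M. \<Sum>\<omega>\<in>PiE e (\<lambda>_. A). G e \<omega>)"
    by (rule sum_PiE_prod_disjoint_blocks[OF V(1) disj V(2)]) (auto simp: G_def)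
  also have "\<dots> = real r ^ (card V - 2 * card M) * (real r ^ 2 - 1 + exp (- \<delta>)) ^ card M"
    using edge_sum \<open>card (V - \<Union>M) = _\<close> by (simp add: A_def)
  also have "\<dots> = real r ^ card V * (1 - (1 - exp (- \<delta>)) / real r ^ 2) ^ card M"
  proof -
    have "real r ^ 2 - 1 + exp (- \<delta>) = real r ^ 2 * (1 - (1 - exp (- \<delta>)) / real r ^ 2)"
      using r by (simp add: field_simps)
    moreover have "real r ^ card V = real r ^ (card V - 2 * card M) * (real r ^ 2) ^ card M"
      using \<open>2 * card M \<le> card V\<close> by (simp flip: power_mult power_add)
    ultimately show ?thesis
      by (simp add: power_mult_distrib)
  qed
  finally show ?thesis
    by (simp add: A_def)
qed

lemma card_sparse_selections_mult_less:
  fixes M :: "'v set set" and r k :: nat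
  assumes M: "matching M" and V: "finite V" "\<Union>M \<subseteq> V" and r: "0 < r"
    and \<iota>: "\<And>e v. e \<in> M \<Longrightarrow> v \<in> e \<Longrightarrow> \<iota> v e < r"
    and k: "1 \<le> k" and big: "2 * (real r ^ 3 + real r)\<^sup>2 * ln k < card M"
  shows "card {\<omega> \<in> PiE V (\<lambda>_. {..<r}).
            card (selected_edges \<iota> \<omega> M) < card M / (real r ^ 2 + 1)} * k < r ^ card V"
proof -
  define R where "R = real r ^ 2"
  define n where "n = card M"
  define bad where "bad = {\<omega> \<in> PiE V (\<lambda>_. {..<r}). card (selected_edges \<iota> \<omega> M) < n / (R + 1)}"
  have R: "1 \<le> R"
    using r by (simp add: R_def)
  have "card bad * exp (- n / (R + 1)\<^sup>2)
      \<le> (\<Sum>\<omega>\<in>PiE V (\<lambda>_. {..<r}). exp (- (1 / (R + 1)) * card (selected_edges \<iota> \<omega> M)))"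
    using card_less_mult_exp_le_sum_exp[where S = "\<lambda>\<omega>. real (card (selected_edges \<iota> \<omega> M))"
        and \<Omega> = "PiE V (\<lambda>_. {..<r})" and \<delta> = "1 / (R + 1)" and a = "real n / (R + 1)"] V(1) R
    by (simp add: bad_def finite_PiE power2_eq_square)
  also have "\<dots> = real r ^ card V * (1 - (1 - exp (- (1 / (R + 1)))) / R) ^ n"
    unfolding R_def n_def by (rule sum_exp_card_selected_edges[OF M V r \<iota>])
  also have "\<dots> < real r ^ card V * (exp (- n / (R + 1)\<^sup>2) / k)"
  proof -
    have "(real r ^ 3 + real r)\<^sup>2 = R * (R + 1)\<^sup>2"
      by (simp add: R_def power2_eq_square power3_eq_cube algebra_simps)
    then have "(1 - (1 - exp (- 1 / (R + 1))) / R) ^ n < exp (- n / (R + 1)\<^sup>2) / k"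
      using big by (intro chernoff_exponent_bound[OF R k]) (simp add: n_def mult.assoc)
    then show ?thesis
      using r by (intro mult_strict_left_mono) auto
  qed
  finally have "card bad * k * exp (- n / (R + 1)\<^sup>2) < real r ^ card V * exp (- n / (R + 1)\<^sup>2)"
    using k by (simp add: field_simps)
  then have "card bad * k < r ^ card V"
    by (simp flip: of_nat_mult of_nat_power)
  then show ?thesis
    by (simp add: bad_def R_def n_def)
qed

lemma exists_choice_with_dense_selections:
  fixes M :: "'i \<Rightarrow> 'v set set" and r :: nat
  assumes "finite V" "0 < r" "finite I" "I \<noteq> {}"
    and match: "\<And>i. i \<in> I \<Longrightarrow> matching (M i)" and sub: "\<And>i. i \<in> I \<Longrightarrow> \<Union>(M i) \<subseteq> V"
    and \<iota>: "\<And>i e v. i \<in> I \<Longrightarrow> e \<in> M i \<Longrightarrow> v \<in> e \<Longrightarrow> \<iota> v e < r"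
    and big: "\<And>i. i \<in> I \<Longrightarrow> 2 * (real r ^ 3 + real r)\<^sup>2 * ln (card I) < card (M i)"
  shows "\<exists>\<omega>. \<forall>i\<in>I. card (M i) / (real r ^ 2 + 1) \<le> card (selected_edges \<iota> \<omega> (M i))"
proof -
  define \<Omega> where "\<Omega> = PiE V (\<lambda>_. {..<r})"
  define bad where "bad i = {\<omega> \<in> \<Omega>. card (selected_edges \<iota> \<omega> (M i)) < card (M i) / (real r ^ 2 + 1)}"
    for i
  have "\<exists>\<omega>\<in>\<Omega>. \<forall>i\<in>I. \<omega> \<notin> bad i"
  proof (rule exists_outside_small_sets)
    show "finite \<Omega>"
      using assms(1) by (simp add: \<Omega>_def finite_PiE)
    show "card (bad i) * card I < card \<Omega>" if "i \<in> I" for i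
    proof -
      have "1 \<le> card I"
        using assms(3,4) by (simp add: Suc_leI card_gt_0_iff)
      then have "card (bad i) * card I < r ^ card V"
        unfolding bad_def \<Omega>_def
        by (intro card_sparse_selections_mult_less) (use assms match sub \<iota> big that in auto)
      then show ?thesis
        using assms(1) by (simp add: \<Omega>_def card_PiE)
    qed
  qed (use assms(3,4) in \<open>auto simp: bad_def\<close>)
  then show ?thesis
    by (auto simp: bad_def not_less)
qed

lemma exists_matching_dense_in_each:
  fixes M :: "'i \<Rightarrow> 'v set set" and r :: nat
  assumes E: "finite E" "is_edge_set E" "max_degree_le E r" and "finite I"
    and match: "\<And>i. i \<in> I \<Longrightarrow> matching (M i)" and sub: "\<And>i. i \<in> I \<Longrightarrow> M i \<subseteq> E"
    and big: "\<And>i. i \<in> I \<Longrightarrow> 2 * (real r ^ 3 + real r)\<^sup>2 * ln (card I) < card (M i)"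
  shows "\<exists>H. matching H \<and> H \<subseteq> E \<and> (\<forall>i\<in>I. card (M i) / (real r ^ 2 + 1) \<le> card (H \<inter> M i))"
proof (cases "I = {}")
  case True
  then show ?thesis
    by (intro exI[of _ "{}"]) (auto simp: matching_def is_edge_set_def)
next
  case False
  obtain \<iota> where inj: "\<And>v. inj_on (\<iota> v) {e \<in> E. v \<in> e}"
    and less: "\<And>e v. e \<in> E \<Longrightarrow> v \<in> e \<Longrightarrow> \<iota> v e < r"
    using incidence_labelling_exists[OF E(1,3)] by blast
  obtain i where "i \<in> I"
    using False by blast
  have "0 \<le> 2 * (real r ^ 3 + real r)\<^sup>2 * ln (card I)"
    using False \<open>finite I\<close> by (simp add: Suc_leI card_gt_0_iff)
  then have "0 < real (card (M i))"
    using big[OF \<open>i \<in> I\<close>] by linarith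
  then have "M i \<noteq> {}"
    by auto
  then obtain e v where "e \<in> M i" "v \<in> e"
    using match[OF \<open>i \<in> I\<close>] by (fastforce simp: matching_def is_edge_set_def)
  then have "0 < r"
    using less[of e v] sub[OF \<open>i \<in> I\<close>] by auto
  have "finite (\<Union>E)"
    using E(1,2) by (auto simp: is_edge_set_def card_ge_0_finite)
  have "\<exists>\<omega>. \<forall>i\<in>I. card (M i) / (real r ^ 2 + 1) \<le> card (selected_edges \<iota> \<omega> (M i))"
  proof (rule exists_choice_with_dense_selections)
    show "\<Union>(M i) \<subseteq> \<Union>E" if "i \<in> I" for i
      using sub[OF that] by blast
    show "\<iota> v e < r" if "i \<in> I" "e \<in> M i" "v \<in> e" for i e v
      using that sub by (intro less) auto
  qed (use \<open>finite (\<Union>E)\<close> \<open>0 < r\<close> \<open>finite I\<close> False match big in auto)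
  then obtain \<omega> where \<omega>: "\<forall>i\<in>I. card (M i) / (real r ^ 2 + 1) \<le> card (selected_edges \<iota> \<omega> (M i))"
    by blast
  show ?thesis
  proof (intro exI conjI ballI)
    show "matching (selected_edges \<iota> \<omega> E)"
      by (rule matching_selected_edges[OF E(1,2) inj])
    show "selected_edges \<iota> \<omega> E \<subseteq> E"
      by (auto simp: selected_edges_def)
    fix i assume "i \<in> I"
    then have "selected_edges \<iota> \<omega> E \<inter> M i = selected_edges \<iota> \<omega> (M i)"
      using sub by (auto simp: selected_edges_def)
    then show "card (M i) / (real r ^ 2 + 1) \<le> card (selected_edges \<iota> \<omega> E \<inter> M i)"
      using \<omega> \<open>i \<in> I\<close> by simp
  qed
qed

theorem lemma4p2:
  fixes k r :: nat and M :: "nat \<Rightarrow> 'a set set"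
  assumes match: "\<And>i. i \<in> {1..k} \<Longrightarrow> matching (M i)"
    and deg: "max_degree_le (\<Union>i\<in>{1..k}. M i) r"
    and big: "\<And>i. i \<in> {1..k} \<Longrightarrow> real (card (M i)) > 2 * (real r ^ 3 + real r)^2 * ln (real k)"
  shows "\<exists>H. matching H \<and> H \<subseteq> (\<Union>i\<in>{1..k}. M i) \<and>
           (\<forall>i\<in>{1..k}. real (card (H \<inter> M i)) \<ge> real (card (M i)) / (real r ^ 2 + 1))"
proof -
  have "finite (\<Union>i\<in>{1..k}. M i)" "is_edge_set (\<Union>i\<in>{1..k}. M i)"
    using match by (auto simp: matching_def is_edge_set_def)
  then show ?thesis
    by (rule exists_matching_dense_in_each[OF _ _ deg]) (use match big in auto)
qed

end
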